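(* Let $(x_i^k)$, $(y_i^k)$ ($i=1,\dots,n$) and $(z^k)$ be generated by Algorithm PS (under (A1)–(A7)). Then for every $k\ge0$, every $i\in\{1,\dots,n\}$ and every $(r_i,a_i)$ with $a_i\in A_i(r_i)$, $$\langle r_i-x_i^k,\ y_i^k-(B_i+C_i+D_i)(r_i)-a_i\rangle\le\frac1{4\beta_i}\|x_i^k-G_iz^k\|^2.$$
   Context: Standing setting. Let $\mathcal H_0,\dots,\mathcal H_{n-1}$ be real Hilbert spaces ($n\ge2$) and $\mathcal H_n:=\mathcal H_0$. Conventions: $0\cdot\infty=0$, $r\cdot\infty=\infty$ for $r>0$, $1/\infty=0$, $1/0=\infty$. For each $i=1,\dots,n$: (A1) $G_i:\mathcal H_0\to\mathcal H_i$ is bounded linear and $G_n=I$; (A2) $A_i:\mathcal H_i\rightrightarrows\mathcal H_i$ is maximal monotone; (A3) $B_i:\mathcal H_i\to\mathcal H_i$ is monotone and $\ell_i$-Lipschitz, $\ell_i\in[0,\infty)$; (A4) $C_i:\mathcal H_i\to\mathcal H_i$ is $\beta_i$-cocoercive with $\beta_i\in(0,\infty]$, i.e. $\langle x-y,C_ix-C_iy\rangle\ge\beta_i\|C_ix-C_iy\|^2$ for all $x,y$ (so $\beta_i=\infty$ means $C_i$ is constant, and then $1/(4\beta_i)=0$); (A5) $D_i:\mathcal H_i\to\mathcal H_i$ is monotone and continuously differentiable with $\|D_i'(x)-D_i'(y)\|\le m_i\|x-y\|$ for all $x,y$, $m_i\in[0,\infty)$; (A6) with $T_i:=A_i+B_i+C_i+D_i$,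 the inclusion $0\in\sum_{i=1}^nG_i^*T_i(G_iz)$ has at least one solution $z\in\mathcal H_0$; (A7) there is $\mathcal I_D\subset\{1,\dots,n\}$ with $m_i>0$ for $i\in\mathcal I_D$ and $m_i=0$, $D_i=0$ for $i\notin\mathcal I_D$. Notation: $D_{i,(u)}(x):=D_i(u)+D_i'(u)(x-u)$; for a maximal monotone $S$, $J_S:=(S+I)^{-1}$. $\boldsymbol{\mathcal H}:=\mathcal H_0\times\mathcal H_1\times\cdots\times\mathcal H_{n-1}$ with inner product $\langle p,\tilde p\rangle_\gamma:=\gamma\langle z,\tilde z\rangle+\sum_{i=1}^{n-1}\langle w_i,\tilde w_i\rangle$ for $p=(z,w_1,\dots,w_{n-1})$, $\tilde p=(\tilde z,\tilde w_1,\dots,\tilde w_{n-1})$, and norm $\|\cdot\|_\gamma$; for such $p$ one writes $w_n:=-\sum_{i=1}^{n-1}G_i^*w_i$. The extended solution set is $\mathcal S:=\{p\in\boldsymbol{\mathcal H}: w_i\in T_i(G_iz),\ i=1,\dots,n\}$ (with $w_n$ as just defined). Algorithm PS. Input: $(z^0,w_1^0,\dots,w_{n-1}^0)\in\boldsymbol{\mathcal H}$, $0<\underline\tau<\overline\tau<2$, $0<\underline\theta<\overline\theta<2$, $\hat\rho>0$, $\hat\delta>0$, $\gamma>0$; $w_n^0:=-\sum_{i=1}^{n-1}G_i^*w_i^0$. For $k=0,1,2,\dots$: for each $i=1,\dots,n$ define $(\rho_i^k,x_i^k,y_i^k)$ as follows. (i) If $w_i^k\in T_i(G_iz^k)$: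 $\rho_i^k=\hat\rho$, $x_i^k=G_iz^k$, $y_i^k=w_i^k$. (ii) Otherwise, if $i\in\mathcal I_D$: $\rho_i^k>0$ and $x_i^k=J_{\rho_i^k(A_i+D_{i,(G_iz^k)})}\big(G_iz^k+\rho_i^kw_i^k-\rho_i^k(B_i+C_i)(G_iz^k)\big)$ satisfy $\underline\theta\le4\ell_i^2(\rho_i^k)^2+(\beta_i^{-1}+\hat\delta)\rho_i^k+(m_i\rho_i^k\|x_i^k-G_iz^k\|)^2\le\overline\theta$, and $y_i^k=\frac{G_iz^k-x_i^k}{\rho_i^k}+w_i^k+[B_i(x_i^k)-B_i(G_iz^k)]+[D_i(x_i^k)-D_{i,(G_iz^k)}(x_i^k)]$. (iii) Otherwise ($i\notin\mathcal I_D$): some $\rho_i^k>0$ is chosen, $x_i^k=J_{\rho_i^kA_i}\big(G_iz^k+\rho_i^kw_i^k-\rho_i^k(B_i+C_i)(G_iz^k)\big)$ and $y_i^k=\frac{G_iz^k-x_i^k}{\rho_i^k}+w_i^k+[B_i(x_i^k)-B_i(G_iz^k)]$. Then set $u_i^k=x_i^k-G_ix_n^k$ ($i=1,\dots,n-1$), $v^k=\sum_{i=1}^nG_i^*y_i^k$, $\varphi_k=\langle z^k,v^k\rangle+\sum_{i=1}^{n-1}\langle w_i^k,u_i^k\rangle-\sum_{i=1}^n\big[\langle x_i^k,y_i^k\rangle+\frac1{4\beta_i}\|x_i^k-G_iz^k\|^2\big]$, $\pi_k=\gamma^{-1}\|v^k\|^2+\sum_{i=1}^{n-1}\|u_i^k\|^2$.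 If $\varphi_k>0$: choose $\tau_k\in[\underline\tau,\overline\tau]$, $\alpha_k=\tau_k\varphi_k/\pi_k$, $z^{k+1}=z^k-\gamma^{-1}\alpha_kv^k$, $w_i^{k+1}=w_i^k-\alpha_ku_i^k$ ($i=1,\dots,n-1$); otherwise $z^{k+1}=z^k$, $w_i^{k+1}=w_i^k$. Finally $w_n^{k+1}=-\sum_{i=1}^{n-1}G_i^*w_i^{k+1}$. *)

theory Defs
  imports "HOL-Analysis.Analysis"
begin

text \<open>All Hilbert spaces H_0,...,H_{n-1} are modelled as closed linear subspaces
  of one ambient real Hilbert space of type 'a; operators are considered on these
  carriers only.\<close>

definition bounded_linear_on :: "'a::real_normed_vector set \<Rightarrow> 'b::real_normed_vector set \<Rightarrow> ('a \<Rightarrow> 'b) \<Rightarrow> bool" where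
  "bounded_linear_on S T f \<longleftrightarrow>
     (\<forall>x\<in>S. f x \<in> T) \<and> (\<forall>x\<in>S. \<forall>y\<in>S. f (x + y) = f x + f y) \<and>
     (\<forall>c. \<forall>x\<in>S. f (c *\<^sub>R x) = c *\<^sub>R f x) \<and> (\<exists>K. \<forall>x\<in>S. norm (f x) \<le> K * norm x)"

definition adjoint_on :: "'a::real_inner set \<Rightarrow> ('a \<Rightarrow> 'a) \<Rightarrow> 'a \<Rightarrow> 'a" where
  "adjoint_on S G w = (THE v. v \<in> S \<and> (\<forall>z\<in>S. inner (G z) w = inner z v))"

definition mono_op :: "'a::real_inner set \<Rightarrow> ('a \<Rightarrow> 'a set) \<Rightarrow> bool" where
  "mono_op H A \<longleftrightarrow> (\<forall>x. A x \<noteq> {} \<longrightarrow> x \<in> H) \<and> (\<forall>x. A x \<subseteq> H) \<and>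
     (\<forall>x y u v. u \<in> A x \<longrightarrow> v \<in> A y \<longrightarrow> inner (x - y) (u - v) \<ge> 0)"

definition maximal_monotone_op :: "'a::real_inner set \<Rightarrow> ('a \<Rightarrow> 'a set) \<Rightarrow> bool" where
  "maximal_monotone_op H A \<longleftrightarrow> mono_op H A \<and>
     (\<forall>x\<in>H. \<forall>u\<in>H. (\<forall>y v. v \<in> A y \<longrightarrow> inner (x - y) (u - v) \<ge> 0) \<longrightarrow> u \<in> A x)"

definition mono_fun :: "'a::real_inner set \<Rightarrow> ('a \<Rightarrow> 'a) \<Rightarrow> bool" where
  "mono_fun H B \<longleftrightarrow> (\<forall>x\<in>H. B x \<in> H) \<and> (\<forall>x\<in>H. \<forall>y\<in>H. inner (x - y) (B x - B y) \<ge> 0)"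

definition lipschitz_fun :: "'a::real_normed_vector set \<Rightarrow> real \<Rightarrow> ('a \<Rightarrow> 'a) \<Rightarrow> bool" where
  "lipschitz_fun H l B \<longleftrightarrow> (\<forall>x\<in>H. \<forall>y\<in>H. norm (B x - B y) \<le> l * norm (x - y))"

text \<open>beta-cocoercivity with beta in (0,\<infinity>], using extended-real arithmetic
  (\<infinity> * 0 = 0, \<infinity> * r = \<infinity> for r > 0).\<close>
definition cocoercive_on :: "'a::real_inner set \<Rightarrow> ereal \<Rightarrow> ('a \<Rightarrow> 'a) \<Rightarrow> bool" where
  "cocoercive_on H \<beta> C \<longleftrightarrow> (\<forall>x\<in>H. C x \<in> H) \<and>
     (\<forall>x\<in>H. \<forall>y\<in>H. \<beta> * ereal ((norm (C x - C y))\<^sup>2) \<le> ereal (inner (x - y) (C x - C y)))"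

text \<open>1/beta with 1/\<infinity> = 0.\<close>
definition binv :: "ereal \<Rightarrow> real" where
  "binv \<beta> = real_of_ereal (inverse \<beta>)"

definition T_op :: "('a::real_vector \<Rightarrow> 'a set) \<Rightarrow> ('a \<Rightarrow> 'a) \<Rightarrow> ('a \<Rightarrow> 'a) \<Rightarrow> ('a \<Rightarrow> 'a) \<Rightarrow> 'a \<Rightarrow> 'a set" where
  "T_op A B C D x = (\<lambda>a. a + B x + C x + D x) ` A x"

definition lin_D :: "('a::real_vector \<Rightarrow> 'a) \<Rightarrow> ('a \<Rightarrow> 'a \<Rightarrow> 'a) \<Rightarrow> 'a \<Rightarrow> 'a \<Rightarrow> 'a" where
  "lin_D D D' u x = D u + D' u (x - u)"

text \<open>Resolvent J_S = (S + I)^{-1}, as the (set-valued) inverse operator.\<close>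
definition resolvent :: "('a::real_vector \<Rightarrow> 'a set) \<Rightarrow> 'a \<Rightarrow> 'a set" where
  "resolvent S u = {x. u \<in> (\<lambda>s. s + x) ` S x}"

text \<open>One block i of iteration k of Algorithm PS; g = G_i z^k, w = w_i^k.\<close>
definition PS_block :: "bool \<Rightarrow> real \<Rightarrow> real \<Rightarrow> real \<Rightarrow> ('a::real_inner \<Rightarrow> 'a set) \<Rightarrow> ('a \<Rightarrow> 'a) \<Rightarrow> ('a \<Rightarrow> 'a)
   \<Rightarrow> ('a \<Rightarrow> 'a) \<Rightarrow> ('a \<Rightarrow> 'a \<Rightarrow> 'a) \<Rightarrow> real \<Rightarrow> real \<Rightarrow> real \<Rightarrow> real
   \<Rightarrow> 'a \<Rightarrow> 'a \<Rightarrow> real \<Rightarrow> 'a \<Rightarrow> 'a \<Rightarrow> bool" where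
  "PS_block inD l bi m A B C D D' \<theta>lo \<theta>hi \<rho>hat \<delta>hat g w \<rho> x y \<longleftrightarrow>
    (if w \<in> T_op A B C D g then \<rho> = \<rho>hat \<and> x = g \<and> y = w
     else if inD then
       \<rho> > 0 \<and>
       x \<in> resolvent (\<lambda>p. (\<lambda>a. \<rho> *\<^sub>R (a + lin_D D D' g p)) ` A p)
                       (g + \<rho> *\<^sub>R w - \<rho> *\<^sub>R (B g + C g)) \<and>
       \<theta>lo \<le> 4 * l\<^sup>2 * \<rho>\<^sup>2 + (bi + \<delta>hat) * \<rho> + (m * \<rho> * norm (x - g))\<^sup>2 \<and>
       4 * l\<^sup>2 * \<rho>\<^sup>2 + (bi + \<delta>hat) * \<rho> + (m * \<rho> * norm (x - g))\<^sup>2 \<le> \<theta>hi \<and>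
       y = (1 / \<rho>) *\<^sub>R (g - x) + w + (B x - B g) + (D x - lin_D D D' g x)
     else
       \<rho> > 0 \<and>
       x \<in> resolvent (\<lambda>p. (\<lambda>a. \<rho> *\<^sub>R a) ` A p) (g + \<rho> *\<^sub>R w - \<rho> *\<^sub>R (B g + C g)) \<and>
       y = (1 / \<rho>) *\<^sub>R (g - x) + w + (B x - B g))"

text \<open>Projection step of iteration k (indices i = 1..n, w_i for i = 1..n-1).\<close>
definition PS_update :: "nat \<Rightarrow> 'a::real_inner set \<Rightarrow> (nat \<Rightarrow> 'a \<Rightarrow> 'a) \<Rightarrow> (nat \<Rightarrow> real)
   \<Rightarrow> real \<Rightarrow> real \<Rightarrow> real
   \<Rightarrow> 'a \<Rightarrow> (nat \<Rightarrow> 'a) \<Rightarrow> (nat \<Rightarrow> 'a) \<Rightarrow> (nat \<Rightarrow> 'a) \<Rightarrow> 'a \<Rightarrow> (nat \<Rightarrow> 'a) \<Rightarrow> bool" where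
  "PS_update n H0 G bi \<tau>lo \<tau>hi \<gamma> z w x y z' w' \<longleftrightarrow>
    (let u = (\<lambda>i. x i - G i (x n));
         v = (\<Sum>i=1..n. adjoint_on H0 (G i) (y i));
         \<phi> = inner z v + (\<Sum>i=1..n-1. inner (w i) (u i))
             - (\<Sum>i=1..n. inner (x i) (y i) + bi i / 4 * (norm (x i - G i z))\<^sup>2);
         \<pi> = (norm v)\<^sup>2 / \<gamma> + (\<Sum>i=1..n-1. (norm (u i))\<^sup>2)
     in if \<phi> > 0 then
          (\<exists>\<tau>\<in>{\<tau>lo..\<tau>hi}. let \<alpha> = \<tau> * \<phi> / \<pi> in
             z' = z - (\<alpha> / \<gamma>) *\<^sub>R v \<and> (\<forall>i\<in>{1..n-1}. w' i = w i - \<alpha> *\<^sub>R u i))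
        else z' = z \<and> (\<forall>i\<in>{1..n-1}. w' i = w i))"

end

theory Submission
  imports Defs
begin

text \<open>Each block of the algorithm returns \<open>y = a + B x + D x + C g\<close> with \<open>a \<in> A x\<close> and
  \<open>g = G\<^sub>i z\<^sup>k\<close>: trivially in the first case, and by unfolding the resolvent step otherwise,
  where the linearisation of \<open>D\<close> cancels. Monotonicity of \<open>A\<close>, \<open>B\<close> and \<open>D\<close> then reduces
  the claim to \<open>\<langle>r - x, C g - C r\<rangle> \<le> \<parallel>x - g\<parallel>\<^sup>2/(4\<beta>)\<close>, which is cocoercivity of \<open>C\<close>
  combined with Young's inequality. Cocoercivity is only available on \<open>H\<^sub>i\<close>, so one also needs
  the iterates \<open>z\<^sup>k\<close> to stay in \<open>H\<^sub>0\<close>; this holds because the adjoints in the update exist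
  in \<open>H\<^sub>0\<close>, by the Riesz representation theorem on the closed subspace \<open>H\<^sub>0\<close>, obtained by
  minimising \<open>\<parallel>z\<parallel>\<^sup>2/2 - f z\<close>.\<close>

lemma Cauchy_if_dist_sq_le:
  fixes X :: "nat \<Rightarrow> 'a::metric_space"
  assumes c: "c \<longlonglongrightarrow> 0" and bound: "\<And>m n. (dist (X m) (X n))\<^sup>2 \<le> c m + c n"
  shows "Cauchy X"
proof (rule metric_CauchyI)
  fix e :: real assume e: "0 < e"
  have "\<forall>\<^sub>F n in sequentially. c n < e\<^sup>2 / 2"
    using c e by (intro order_tendstoD(2)) auto
  then obtain N where N: "\<And>n. n \<ge> N \<Longrightarrow> c n < e\<^sup>2 / 2"
    by (auto simp: eventually_sequentially)
  have "dist (X m) (X n) < e" if "m \<ge> N" "n \<ge> N" for m n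
  proof -
    have "(dist (X m) (X n))\<^sup>2 < e\<^sup>2"
      using bound[of m n] N[OF that(1)] N[OF that(2)] by linarith
    then show ?thesis using e by (simp add: power_less_imp_less_base)
  qed
  then show "\<exists>N. \<forall>m\<ge>N. \<forall>n\<ge>N. dist (X m) (X n) < e" by blast
qed

lemma norm_midpoint_parallelogram:
  fixes a b :: "'a::real_inner"
  shows "(norm a)\<^sup>2 / 2 + (norm b)\<^sup>2 / 2 - (norm ((1/2) *\<^sub>R (a + b)))\<^sup>2 = (norm (a - b))\<^sup>2 / 4"
  by (simp add: power2_norm_eq_inner inner_commute algebra_simps)

lemma nonneg_quadratic_linear_coeff_eq_0:
  fixes c q :: real
  assumes q: "q \<ge> 0" and nonneg: "\<And>t. 0 \<le> t * c + t\<^sup>2 * q"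
  shows "c = 0"
proof -
  define t where "t = - c / (q + 1)"
  have t: "t * (q + 1) = - c" unfolding t_def using q by simp
  then have tq: "t * q = - c - t" by (simp add: algebra_simps)
  have "t * c + t\<^sup>2 * q = t * (c + t * q)" by (simp add: power2_eq_square algebra_simps)
  also have "\<dots> = - t\<^sup>2" unfolding tq by (simp add: power2_eq_square)
  finally have "t = 0" using nonneg[of t] by simp
  then show ?thesis using t by simp
qed

lemma tendsto_bounded_additive_on:
  fixes f :: "'a::real_normed_vector \<Rightarrow> real"
  assumes S: "subspace S"
    and add: "\<forall>x\<in>S. \<forall>y\<in>S. f (x + y) = f x + f y"
    and bounded: "\<forall>x\<in>S. \<bar>f x\<bar> \<le> K * norm x"
    and X: "\<And>n. X n \<in> S" and L: "L \<in> S" and lim: "X \<longlonglongrightarrow> L"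
  shows "(\<lambda>n. f (X n)) \<longlonglongrightarrow> f L"
proof -
  have "(\<lambda>n. f (X n) - f L) \<longlonglongrightarrow> 0"
  proof (rule Lim_null_comparison)
    have "\<bar>f (X n) - f L\<bar> \<le> K * norm (X n - L)" for n
      using bounded add X[of n] L S by (metis add_diff_cancel_left' diff_add_cancel subspace_diff)
    then show "\<forall>\<^sub>F n in sequentially. norm (f (X n) - f L) \<le> K * norm (X n - L)" by simp
    show "(\<lambda>n. K * norm (X n - L)) \<longlonglongrightarrow> 0"
      using lim by (intro tendsto_mult_right_zero) (simp add: LIM_zero tendsto_norm_zero)
  qed
  then show ?thesis by (rule LIM_zero_cancel)
qed

lemma energy_minimizer_exists:
  fixes S :: "'a::{real_inner,complete_space} set" and f :: "'a \<Rightarrow> real"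
  assumes S: "subspace S" "closed S"
    and add: "\<forall>x\<in>S. \<forall>y\<in>S. f (x + y) = f x + f y"
    and scale: "\<forall>c. \<forall>x\<in>S. f (c *\<^sub>R x) = c * f x"
    and bounded: "\<forall>x\<in>S. \<bar>f x\<bar> \<le> K * norm x"
  shows "\<exists>L\<in>S. \<forall>z\<in>S. (norm L)\<^sup>2 / 2 - f L \<le> (norm z)\<^sup>2 / 2 - f z"
proof -
  define F where "F z = (norm z)\<^sup>2 / 2 - f z" for z
  have "- K\<^sup>2 / 2 \<le> F z" if "z \<in> S" for z
  proof -
    have "f z \<le> K * norm z" using bounded that by force
    moreover have "0 \<le> (norm z - K)\<^sup>2" by simp
    ultimately show ?thesis unfolding F_def by (simp add: power2_eq_square algebra_simps)
  qed
  then have bdd: "bdd_below (F ` S)" by (meson bdd_belowI2)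
  define d where "d = Inf (F ` S)"
  have d_le: "d \<le> F z" if "z \<in> S" for z unfolding d_def using bdd that by (simp add: cInf_lower)
  have "\<exists>z\<in>S. F z < d + inverse (real (Suc n))" for n
  proof -
    have "Inf (F ` S) < d + inverse (real (Suc n))" unfolding d_def by simp
    then show ?thesis using subspace_0[OF S(1)] by (subst (asm) cInf_less_iff) (auto simp: bdd)
  qed
  then obtain zs where zs: "\<And>n. zs n \<in> S" "\<And>n. F (zs n) < d + inverse (real (Suc n))"
    by metis
  \<comment> \<open>By the parallelogram law a minimising sequence is Cauchy.\<close>
  have "(dist (zs m) (zs n))\<^sup>2 \<le> 4 * inverse (real (Suc m)) + 4 * inverse (real (Suc n))" for m n
  proof -
    have "(1/2) *\<^sub>R (zs m + zs n) \<in> S" using zs(1) S(1) by (simp add: subspace_add subspace_scale)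
    then have "d \<le> F ((1/2) *\<^sub>R (zs m + zs n))" by (rule d_le)
    moreover have "f ((1/2) *\<^sub>R (zs m + zs n)) = (f (zs m) + f (zs n)) / 2"
      using add scale zs(1) S(1) by (simp add: subspace_add)
    ultimately have "(norm (zs m - zs n))\<^sup>2 / 4 \<le> F (zs m) + F (zs n) - 2 * d"
      using norm_midpoint_parallelogram[of "zs m" "zs n"] unfolding F_def by argo
    then show ?thesis using zs(2)[of m] zs(2)[of n] by (simp add: dist_norm)
  qed
  moreover have "(\<lambda>n. 4 * inverse (real (Suc n))) \<longlonglongrightarrow> 0"
    using tendsto_mult_right_zero[OF LIMSEQ_inverse_real_of_nat] .
  ultimately have "Cauchy zs" by (intro Cauchy_if_dist_sq_le)
  then obtain L where L: "zs \<longlonglongrightarrow> L" using Cauchy_convergent convergent_def by blast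
  have LS: "L \<in> S" using closed_sequentially[OF S(2) zs(1) L] .
  have "(\<lambda>n. f (zs n)) \<longlonglongrightarrow> f L"
    using tendsto_bounded_additive_on[OF S(1) add bounded zs(1) LS L] .
  then have "(\<lambda>n. F (zs n)) \<longlonglongrightarrow> F L" unfolding F_def by (intro tendsto_intros L) auto
  moreover have "(\<lambda>n. d + inverse (real (Suc n))) \<longlonglongrightarrow> d"
    using tendsto_add[OF tendsto_const LIMSEQ_inverse_real_of_nat] by simp
  ultimately have "F L \<le> d" using zs(2) by (intro LIMSEQ_le) (auto intro: less_imp_le)
  then show ?thesis using LS d_le unfolding F_def by force
qed

lemma energy_minimizer_represents:
  fixes S :: "'a::real_inner set" and f :: "'a \<Rightarrow> real"
  assumes S: "subspace S"
    and add: "\<forall>x\<in>S. \<forall>y\<in>S. f (x + y) = f x + f y"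
    and scale: "\<forall>c. \<forall>x\<in>S. f (c *\<^sub>R x) = c * f x"
    and L: "L \<in> S" and min: "\<forall>z\<in>S. (norm L)\<^sup>2 / 2 - f L \<le> (norm z)\<^sup>2 / 2 - f z"
    and h: "h \<in> S"
  shows "f h = inner h L"
proof -
  have "0 \<le> t * (inner L h - f h) + t\<^sup>2 * ((norm h)\<^sup>2 / 2)" for t
  proof -
    have "f (L + t *\<^sub>R h) = f L + t * f h" using add scale h L S by (simp add: subspace_scale)
    moreover have "(norm (L + t *\<^sub>R h))\<^sup>2 = (norm L)\<^sup>2 + 2 * t * inner L h + t\<^sup>2 * (norm h)\<^sup>2"
    proof -
      have "inner (L + t *\<^sub>R h) (L + t *\<^sub>R h) = inner L L + 2 * t * inner L h + t\<^sup>2 * inner h h"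
        by (simp add: inner_commute algebra_simps power2_eq_square)
      then show ?thesis by (simp add: power2_norm_eq_inner)
    qed
    moreover have "L + t *\<^sub>R h \<in> S" using L h S by (simp add: subspace_add subspace_scale)
    ultimately show ?thesis using min by (force simp: algebra_simps)
  qed
  then have "inner L h - f h = 0" by (intro nonneg_quadratic_linear_coeff_eq_0[of "(norm h)\<^sup>2 / 2"]) auto
  then show ?thesis by (simp add: inner_commute)
qed

lemma riesz_representation_subspace:
  fixes S :: "'a::{real_inner,complete_space} set" and f :: "'a \<Rightarrow> real"
  assumes S: "subspace S" "closed S"
    and add: "\<forall>x\<in>S. \<forall>y\<in>S. f (x + y) = f x + f y"
    and scale: "\<forall>c. \<forall>x\<in>S. f (c *\<^sub>R x) = c * f x"
    and bounded: "\<forall>x\<in>S. \<bar>f x\<bar> \<le> K * norm x"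
  shows "\<exists>v\<in>S. \<forall>z\<in>S. f z = inner z v"
  using energy_minimizer_exists[OF assms] energy_minimizer_represents[OF S(1) add scale] by blast

lemma adjoint_on_mem:
  fixes S :: "'a::{real_inner,complete_space} set"
  assumes S: "subspace S" "closed S" and G: "bounded_linear_on S T G"
  shows "adjoint_on S G w \<in> S"
proof -
  from G obtain K where add: "\<forall>x\<in>S. \<forall>y\<in>S. G (x + y) = G x + G y"
    and scale: "\<forall>c. \<forall>x\<in>S. G (c *\<^sub>R x) = c *\<^sub>R G x" and K: "\<forall>x\<in>S. norm (G x) \<le> K * norm x"
    unfolding bounded_linear_on_def by blast
  have bound: "\<forall>x\<in>S. \<bar>inner (G x) w\<bar> \<le> K * norm w * norm x"
  proof
    fix x assume x: "x \<in> S"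
    have "\<bar>inner (G x) w\<bar> \<le> norm (G x) * norm w" by (rule Cauchy_Schwarz_ineq2)
    also have "\<dots> \<le> K * norm x * norm w" using K x by (simp add: mult_right_mono)
    finally show "\<bar>inner (G x) w\<bar> \<le> K * norm w * norm x" by (simp add: algebra_simps)
  qed
  have "\<exists>v\<in>S. \<forall>z\<in>S. inner (G z) w = inner z v"
    by (rule riesz_representation_subspace[OF S _ _ bound]) (simp_all add: add scale inner_add_left)
  then obtain v where v: "v \<in> S" "\<forall>z\<in>S. inner (G z) w = inner z v" by blast
  have "u = v" if "u \<in> S" "\<forall>z\<in>S. inner (G z) w = inner z u" for u
  proof -
    have "u - v \<in> S" using that v S(1) by (simp add: subspace_diff)
    then have "inner (u - v) (u - v) = 0" using that v by (metis inner_diff_right right_minus_eq)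
    then show ?thesis by simp
  qed
  then have "adjoint_on S G w = v" unfolding adjoint_on_def using v by (intro the_equality) auto
  then show ?thesis using v by simp
qed

lemma PS_update_mem:
  fixes S :: "'a::{real_inner,complete_space} set"
  assumes S: "subspace S" "closed S" and G: "\<forall>i\<in>{1..n}. bounded_linear_on S (H i) (G i)"
    and update: "PS_update n S G bi \<tau>lo \<tau>hi \<gamma> z w x y z' w'" and z: "z \<in> S"
  shows "z' \<in> S"
proof -
  define v where "v = (\<Sum>i=1..n. adjoint_on S (G i) (y i))"
  have "v \<in> S" unfolding v_def using adjoint_on_mem[OF S] G by (intro subspace_sum[OF S(1)]) blast
  moreover have "z' = z \<or> (\<exists>c. z' = z - c *\<^sub>R v)"
    using update unfolding PS_update_def Let_def v_def by (auto split: if_splits)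
  ultimately show ?thesis using z S(1) by (auto simp: subspace_diff subspace_scale)
qed

lemma cocoercive_on_inner_le:
  assumes \<beta>: "\<beta> > 0" and C: "cocoercive_on H \<beta> C" and g: "g \<in> H" and r: "r \<in> H"
  shows "inner (r - x) (C g - C r) \<le> binv \<beta> / 4 * (norm (x - g))\<^sup>2"
proof -
  have co: "\<beta> * ereal ((norm (C g - C r))\<^sup>2) \<le> ereal (inner (g - r) (C g - C r))"
    using C g r unfolding cocoercive_on_def by blast
  have split: "inner (r - x) (C g - C r) = inner (g - x) (C g - C r) - inner (g - r) (C g - C r)"
    by (simp add: inner_diff_left)
  have cs: "inner (g - x) (C g - C r) \<le> norm (x - g) * norm (C g - C r)"
    by (metis Cauchy_Schwarz_ineq2 abs_le_D1 norm_minus_commute)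
  show ?thesis
  proof (cases \<beta>)
    case (real b)
    with \<beta> have b: "b > 0" by simp
    define s t where "s = norm (x - g)" and "t = norm (C g - C r)"
    have "inner (r - x) (C g - C r) \<le> s * t - b * t\<^sup>2"
      using split cs co real unfolding s_def t_def by simp
    also have "\<dots> \<le> s\<^sup>2 / (4 * b)"
    proof -
      \<comment> \<open>Young's inequality: \<open>4b(st - bt\<^sup>2) = s\<^sup>2 - (2bt - s)\<^sup>2\<close>.\<close>
      have "4 * b * (s * t - b * t\<^sup>2) \<le> s\<^sup>2"
        using zero_le_power2[of "2 * b * t - s"] by (simp add: power2_eq_square algebra_simps)
      then show ?thesis using b by (simp add: field_simps)
    qed
    also have "\<dots> = binv \<beta> / 4 * (norm (x - g))\<^sup>2"
      using real b unfolding binv_def s_def by (simp add: inverse_eq_divide)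
    finally show ?thesis .
  next
    case PInf
    \<comment> \<open>\<open>\<infinity>\<close>-cocoercivity forces \<open>C\<close> to be constant on \<open>H\<close>.\<close>
    have "C g - C r = 0"
    proof (rule ccontr)
      assume "C g - C r \<noteq> 0"
      then have "\<beta> * ereal ((norm (C g - C r))\<^sup>2) = \<infinity>" using PInf by simp
      with co show False by simp
    qed
    then show ?thesis using PInf unfolding binv_def by simp
  qed (use \<beta> in simp)
qed

lemma resolvent_step_eq:
  fixes y g w x a L Bx Bg Cg Dx :: "'a::real_vector"
  assumes \<rho>: "\<rho> > 0" and resolvent: "g + \<rho> *\<^sub>R w - \<rho> *\<^sub>R (Bg + Cg) = \<rho> *\<^sub>R (a + L) + x"
    and y: "y = (1 / \<rho>) *\<^sub>R (g - x) + w + (Bx - Bg) + (Dx - L)"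
  shows "y = a + Bx + Dx + Cg"
proof -
  have gx: "g - x = \<rho> *\<^sub>R (a + L - w + Bg + Cg)"
    using resolvent by (simp add: algebra_simps)
  have "\<rho> *\<^sub>R y = (g - x) + \<rho> *\<^sub>R (w + (Bx - Bg) + (Dx - L))"
    using \<rho> y by (simp add: scaleR_add_right)
  also have "\<dots> = \<rho> *\<^sub>R (a + Bx + Dx + Cg)"
    unfolding gx by (simp add: algebra_simps)
  finally show ?thesis using \<rho> by simp
qed

lemma PS_block_output:
  assumes block: "PS_block inD l bi m A B C D D' \<theta>lo \<theta>hi \<rho>hat \<delta>hat g w \<rho> x y"
    and A: "mono_op H A" and g: "g \<in> H" and D: "\<not> inD \<Longrightarrow> \<forall>u\<in>H. D u = 0"
  shows "\<exists>a\<in>A x. x \<in> H \<and> y = a + B x + D x + C g"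
proof (cases "w \<in> T_op A B C D g")
  case True
  then obtain a where "a \<in> A g" "w = a + B g + C g + D g" unfolding T_op_def by blast
  moreover have "x = g" "y = w" using block True unfolding PS_block_def by auto
  ultimately show ?thesis using g by (auto simp: algebra_simps)
next
  case notT: False
  have xH: "x \<in> H" if "a \<in> A x" for a using A that unfolding mono_op_def by blast
  show ?thesis
  proof (cases inD)
    case True
    with notT block obtain a where a: "a \<in> A x" and "\<rho> > 0"
      "g + \<rho> *\<^sub>R w - \<rho> *\<^sub>R (B g + C g) = \<rho> *\<^sub>R (a + lin_D D D' g x) + x"
      "y = (1 / \<rho>) *\<^sub>R (g - x) + w + (B x - B g) + (D x - lin_D D D' g x)"
      unfolding PS_block_def resolvent_def by auto
    then show ?thesis using resolvent_step_eq xH by blast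
  next
    case False
    with notT block obtain a where a: "a \<in> A x" and "\<rho> > 0"
      "g + \<rho> *\<^sub>R w - \<rho> *\<^sub>R (B g + C g) = \<rho> *\<^sub>R (a + 0) + x"
      "y = (1 / \<rho>) *\<^sub>R (g - x) + w + (B x - B g) + (D x - 0)"
      using D xH unfolding PS_block_def resolvent_def by auto
    then show ?thesis using resolvent_step_eq xH by blast
  qed
qed

lemma PS_block_inner_le:
  assumes A: "mono_op H A" and B: "mono_fun H B" and D: "mono_fun H D"
    and \<beta>: "\<beta> > 0" and C: "cocoercive_on H \<beta> C"
    and x: "x \<in> H" and g: "g \<in> H" and a': "a' \<in> A x" and a: "a \<in> A r"
  shows "inner (r - x) ((a' + B x + D x + C g) - (B r + C r + D r) - a)
           \<le> binv \<beta> / 4 * (norm (x - g))\<^sup>2"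
proof -
  have r: "r \<in> H" using A a unfolding mono_op_def by blast
  have "0 \<le> inner (x - r) (a' - a)" using A a a' unfolding mono_op_def by blast
  moreover have "0 \<le> inner (x - r) (B x - B r)" using B x r unfolding mono_fun_def by blast
  moreover have "0 \<le> inner (x - r) (D x - D r)" using D x r unfolding mono_fun_def by blast
  moreover have "inner (r - x) ((a' + B x + D x + C g) - (B r + C r + D r) - a)
     = inner (r - x) (C g - C r)
       - inner (x - r) (a' - a) - inner (x - r) (B x - B r) - inner (x - r) (D x - D r)"
    by (simp add: inner_diff_left inner_diff_right algebra_simps)
  ultimately show ?thesis using cocoercive_on_inner_le[OF \<beta> C g r, of x] by linarith
qed

theorem lemma4p1:
  fixes n :: nat and H :: "nat \<Rightarrow> 'a::{real_inner,complete_space} set"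
    and G :: "nat \<Rightarrow> 'a \<Rightarrow> 'a" and A :: "nat \<Rightarrow> 'a \<Rightarrow> 'a set"
    and B C D :: "nat \<Rightarrow> 'a \<Rightarrow> 'a" and D' :: "nat \<Rightarrow> 'a \<Rightarrow> 'a \<Rightarrow> 'a"
    and l m :: "nat \<Rightarrow> real" and \<beta> :: "nat \<Rightarrow> ereal" and ID :: "nat set"
    and \<tau>lo \<tau>hi \<theta>lo \<theta>hi \<rho>hat \<delta>hat \<gamma> :: real
    and z :: "nat \<Rightarrow> 'a" and w x y :: "nat \<Rightarrow> nat \<Rightarrow> 'a" and \<rho> :: "nat \<Rightarrow> nat \<Rightarrow> real"
  assumes n2: "n \<ge> 2"
    and Hspaces: "\<forall>i<n. subspace (H i) \<and> closed (H i)" and Hn: "H n = H 0"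
    and A1: "\<forall>i\<in>{1..n}. bounded_linear_on (H 0) (H i) (G i)" and A1n: "\<forall>s\<in>H 0. G n s = s"
    and A2: "\<forall>i\<in>{1..n}. maximal_monotone_op (H i) (A i)"
    and A3: "\<forall>i\<in>{1..n}. l i \<ge> 0 \<and> mono_fun (H i) (B i) \<and> lipschitz_fun (H i) (l i) (B i)"
    and A4: "\<forall>i\<in>{1..n}. \<beta> i > 0 \<and> cocoercive_on (H i) (\<beta> i) (C i)"
    and A5: "\<forall>i\<in>{1..n}. m i \<ge> 0 \<and> mono_fun (H i) (D i) \<and>
              (\<forall>u\<in>H i. (D i has_derivative D' i u) (at u within H i)) \<and>
              (\<forall>u\<in>H i. \<forall>v\<in>H i. \<forall>h\<in>H i. norm (D' i u h - D' i v h) \<le> m i * norm (u - v) * norm h)"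
    and A6: "\<exists>s\<in>H 0. \<exists>v. (\<forall>i\<in>{1..n}. v i \<in> T_op (A i) (B i) (C i) (D i) (G i s)) \<and>
              (\<Sum>i=1..n. adjoint_on (H 0) (G i) (v i)) = 0"
    and A7: "ID \<subseteq> {1..n}" "\<forall>i\<in>ID. m i > 0" "\<forall>i\<in>{1..n} - ID. m i = 0 \<and> (\<forall>u\<in>H i. D i u = 0)"
    and par: "0 < \<tau>lo" "\<tau>lo < \<tau>hi" "\<tau>hi < 2" "0 < \<theta>lo" "\<theta>lo < \<theta>hi" "\<theta>hi < 2"
             "\<rho>hat > 0" "\<delta>hat > 0" "\<gamma> > 0"
    and init: "z 0 \<in> H 0" "\<forall>i\<in>{1..n-1}. w 0 i \<in> H i"
    and wn: "\<forall>k. w k n = - (\<Sum>i=1..n-1. adjoint_on (H 0) (G i) (w k i))"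
    and blocks: "\<forall>k. \<forall>i\<in>{1..n}. PS_block (i \<in> ID) (l i) (binv (\<beta> i)) (m i) (A i) (B i) (C i) (D i) (D' i)
                   \<theta>lo \<theta>hi \<rho>hat \<delta>hat (G i (z k)) (w k i) (\<rho> k i) (x k i) (y k i)"
    and update: "\<forall>k. PS_update n (H 0) G (\<lambda>i. binv (\<beta> i)) \<tau>lo \<tau>hi \<gamma>
                   (z k) (w k) (x k) (y k) (z (Suc k)) (w (Suc k))"
  shows "\<forall>k. \<forall>i\<in>{1..n}. \<forall>r a. a \<in> A i r \<longrightarrow>
           inner (r - x k i) (y k i - (B i r + C i r + D i r) - a)
             \<le> binv (\<beta> i) / 4 * (norm (x k i - G i (z k)))\<^sup>2"
proof (intro allI ballI impI)
  fix k i r a assume i: "i \<in> {1..n}" and a: "a \<in> A i r"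
  have H0: "subspace (H 0)" "closed (H 0)" using Hspaces n2 by auto
  have z: "z k \<in> H 0" for k
  proof (induction k)
    case (Suc k) then show ?case using PS_update_mem[OF H0 A1 update[rule_format]] by blast
  qed (use init in simp)
  define g where "g = G i (z k)"
  have g: "g \<in> H i" using A1 i z unfolding g_def bounded_linear_on_def by blast
  have A: "mono_op (H i) (A i)" using A2 i unfolding maximal_monotone_op_def by blast
  have "PS_block (i \<in> ID) (l i) (binv (\<beta> i)) (m i) (A i) (B i) (C i) (D i) (D' i)
      \<theta>lo \<theta>hi \<rho>hat \<delta>hat g (w k i) (\<rho> k i) (x k i) (y k i)"
    using blocks i unfolding g_def by blast
  then obtain a' where "a' \<in> A i (x k i)" "x k i \<in> H i"
    "y k i = a' + B i (x k i) + D i (x k i) + C i g"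
    using PS_block_output[OF _ A g] A7(3) i by blast
  with PS_block_inner_le[OF A _ _ _ _ _ g _ a] A3 A4 A5 i
  show "inner (r - x k i) (y k i - (B i r + C i r + D i r) - a)
          \<le> binv (\<beta> i) / 4 * (norm (x k i - G i (z k)))\<^sup>2"
    unfolding g_def by auto
qed

end
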